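(* Let $\mu$ be a bounded continuous valuation on a topological space $X$, and let $\nu:\mathcal OX\to\mathbb R\cup\{-\infty,+\infty\}$ be a monotonic map with $\nu(\emptyset)=0$. If $\mu+\nu$ (defined pointwise) is a continuous valuation, then so is $\nu$.
   Context: A valuation on $X$ is a map $\mathcal OX\to[0,\infty]$ with value $0$ on $\emptyset$, monotone and modular; it is continuous if it preserves suprema of directed families of opens; bounded if its value on $X$ is finite. *)

theory Defs
  imports "HOL-Analysis.Analysis"
begin

text \<open>Maps on the open sets of a topological space X, valued in the extended reals.
  Only the values on open sets of X matter.\<close>

definition monotone_on_opens :: "'a topology \<Rightarrow> ('a set \<Rightarrow> ereal) \<Rightarrow> bool" where
  "monotone_on_opens X m \<longleftrightarrow>
     (\<forall>U V. openin X U \<and> openin X V \<and> U \<subseteq> V \<longrightarrow> m U \<le> m V)"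

definition valuation_on :: "'a topology \<Rightarrow> ('a set \<Rightarrow> ereal) \<Rightarrow> bool" where
  "valuation_on X m \<longleftrightarrow>
     (\<forall>U. openin X U \<longrightarrow> 0 \<le> m U) \<and>
     m {} = 0 \<and>
     monotone_on_opens X m \<and>
     (\<forall>U V. openin X U \<and> openin X V \<longrightarrow> m U + m V = m (U \<union> V) + m (U \<inter> V))"

definition directed_opens :: "'a topology \<Rightarrow> 'a set set \<Rightarrow> bool" where
  "directed_opens X D \<longleftrightarrow>
     D \<noteq> {} \<and> (\<forall>U\<in>D. openin X U) \<and> (\<forall>U\<in>D. \<forall>V\<in>D. \<exists>W\<in>D. U \<subseteq> W \<and> V \<subseteq> W)"

definition continuous_valuation_on :: "'a topology \<Rightarrow> ('a set \<Rightarrow> ereal) \<Rightarrow> bool" where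
  "continuous_valuation_on X m \<longleftrightarrow>
     valuation_on X m \<and>
     (\<forall>D. directed_opens X D \<longrightarrow> m (\<Union>D) = (SUP U\<in>D. m U))"

definition bounded_valuation_on :: "'a topology \<Rightarrow> ('a set \<Rightarrow> ereal) \<Rightarrow> bool" where
  "bounded_valuation_on X m \<longleftrightarrow> valuation_on X m \<and> m (topspace X) < \<infinity>"

end

theory Submission
  imports Defs
begin

text \<open>Since \<mu> is bounded, all its values on opens are finite, so \<mu> can be cancelled from the
  modularity equations and from the continuity equations of \<mu> + \<nu>; the only inequality that
  does not come for free, \<nu>(\<Union>D) \<le> sup \<nu>, follows from sup (\<mu> + \<nu>) \<le> sup \<mu> + sup \<nu>.
  Nonnegativity of \<nu> is monotonicity together with \<nu>(\<emptyset>) = 0.\<close>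

lemma bounded_valuation_on_finite:
  assumes "bounded_valuation_on X m" and "openin X U"
  shows "\<bar>m U\<bar> \<noteq> \<infinity>"
proof -
  have "0 \<le> m U" and "m U \<le> m (topspace X)" and "m (topspace X) < \<infinity>"
    using assms openin_subset[OF assms(2)]
    unfolding bounded_valuation_on_def valuation_on_def monotone_on_opens_def by auto
  then show ?thesis by auto
qed

lemma monotone_on_opens_nonneg:
  assumes "monotone_on_opens X m" and "m {} = 0" and "openin X U"
  shows "0 \<le> m U"
  using assms unfolding monotone_on_opens_def by (metis empty_subsetI openin_empty)

lemma ereal_add_cancel_sums:
  fixes a b c d x y z w :: ereal
  assumes "\<bar>a\<bar> \<noteq> \<infinity>" "\<bar>b\<bar> \<noteq> \<infinity>" "\<bar>c\<bar> \<noteq> \<infinity>" "\<bar>d\<bar> \<noteq> \<infinity>"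
    and "a + b = c + d"
    and "(a + x) + (b + y) = (c + z) + (d + w)"
  shows "x + y = z + w"
proof -
  have "(a + x) + (b + y) = (a + b) + (x + y)" and "(c + z) + (d + w) = (c + d) + (z + w)"
    by (simp_all only: add_ac)
  then have "(a + b) + (x + y) = (a + b) + (z + w)"
    using assms(5,6) by simp
  moreover have "a + b \<noteq> -\<infinity>" and "a + b \<noteq> \<infinity>"
    using assms(1,2) by auto
  ultimately show ?thesis
    by (simp add: ereal_add_cancel_left)
qed

lemma valuation_on_cancel:
  assumes \<mu>: "valuation_on X \<mu>" and \<mu>_finite: "\<And>U. openin X U \<Longrightarrow> \<bar>\<mu> U\<bar> \<noteq> \<infinity>"
    and \<nu>_mono: "monotone_on_opens X \<nu>" and \<nu>_empty: "\<nu> {} = 0"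
    and sum: "valuation_on X (\<lambda>U. \<mu> U + \<nu> U)"
  shows "valuation_on X \<nu>"
proof -
  have "\<nu> U + \<nu> V = \<nu> (U \<union> V) + \<nu> (U \<inter> V)" if "openin X U" "openin X V" for U V
  proof (rule ereal_add_cancel_sums)
    show "\<mu> U + \<mu> V = \<mu> (U \<union> V) + \<mu> (U \<inter> V)"
      using \<mu> that unfolding valuation_on_def by blast
    show "(\<mu> U + \<nu> U) + (\<mu> V + \<nu> V) = (\<mu> (U \<union> V) + \<nu> (U \<union> V)) + (\<mu> (U \<inter> V) + \<nu> (U \<inter> V))"
      using sum that unfolding valuation_on_def by blast
  qed (simp_all add: \<mu>_finite that openin_Un openin_Int)
  then show ?thesis
    using monotone_on_opens_nonneg[OF \<nu>_mono \<nu>_empty] \<nu>_mono \<nu>_empty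
    unfolding valuation_on_def by blast
qed

lemma ereal_SUP_add_cancel:
  fixes f g :: "'i \<Rightarrow> ereal"
  assumes finite: "\<bar>(SUP i\<in>I. f i)\<bar> \<noteq> \<infinity>"
    and sum: "(SUP i\<in>I. f i) + b = (SUP i\<in>I. f i + g i)"
    and upper: "(SUP i\<in>I. g i) \<le> b"
  shows "b = (SUP i\<in>I. g i)"
proof -
  have "(SUP i\<in>I. f i + g i) \<le> (SUP i\<in>I. f i) + (SUP i\<in>I. g i)"
    by (rule SUP_least, rule add_mono) (auto intro: SUP_upper)
  then have "(SUP i\<in>I. f i) + b \<le> (SUP i\<in>I. f i) + (SUP i\<in>I. g i)"
    using sum by simp
  then have "b \<le> (SUP i\<in>I. g i)"
    using finite by (cases "SUP i\<in>I. f i") (simp_all add: ereal_add_le_add_iff)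
  then show ?thesis
    using upper by simp
qed

theorem lemma3p5:
  fixes X :: "'a topology" and \<mu> \<nu> :: "'a set \<Rightarrow> ereal"
  assumes "continuous_valuation_on X \<mu>"
    and "bounded_valuation_on X \<mu>"
    and "monotone_on_opens X \<nu>"
    and "\<nu> {} = 0"
    and "continuous_valuation_on X (\<lambda>U. \<mu> U + \<nu> U)"
  shows "continuous_valuation_on X \<nu>"
proof -
  note \<mu>_finite = bounded_valuation_on_finite[OF assms(2)]
  have "valuation_on X \<nu>"
    using valuation_on_cancel[of X \<mu>, OF _ \<mu>_finite assms(3,4)] assms(1,5)
    unfolding continuous_valuation_on_def by blast
  moreover have "\<nu> (\<Union>D) = (SUP U\<in>D. \<nu> U)" if D: "directed_opens X D" for D
  proof (rule ereal_SUP_add_cancel)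
    have opens: "\<forall>U\<in>D. openin X U"
      using D unfolding directed_opens_def by blast
    have \<mu>_cont: "\<mu> (\<Union>D) = (SUP U\<in>D. \<mu> U)"
      using assms(1) D unfolding continuous_valuation_on_def by blast
    then show "\<bar>(SUP U\<in>D. \<mu> U)\<bar> \<noteq> \<infinity>"
      using \<mu>_finite[of "\<Union>D"] opens by (simp add: openin_Union)
    show "(SUP U\<in>D. \<mu> U) + \<nu> (\<Union>D) = (SUP U\<in>D. \<mu> U + \<nu> U)"
      using assms(5) D \<mu>_cont unfolding continuous_valuation_on_def by auto
    show "(SUP U\<in>D. \<nu> U) \<le> \<nu> (\<Union>D)"
      using assms(3) opens unfolding monotone_on_opens_def
      by (intro SUP_least) (simp add: Sup_upper openin_Union)
  qed
  ultimately show ?thesis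
    unfolding continuous_valuation_on_def by blast
qed

end
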